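(* Let $p\ge2$ be an integer and let $f\in\mathcal{R}$ satisfy $U_pf=\lambda f$ for some $\lambda\neq0$. If $f(x)=x^m\tilde f(x)$ for some positive integer $m$ and some rational function $\tilde f$ regular at $0$ with $\tilde f(0)\neq0$, then $p\nmid m$.
   Context: $\mathcal{R}$ denotes the real vector space of rational functions $f(x)=A(x)/B(x)$ with $A,B\in\mathbb{R}[x]$, $B(0)\neq 0$ and $\deg A<\deg B$. For $f$ with Taylor expansion $f(x)=\sum_{n\ge0}a_nx^n$ at $0$ and a positive integer $p$, $U_pf(x)=\sum_{n\ge 0}a_{pn}x^n$. *)

theory Defs
  imports "HOL-Computational_Algebra.Computational_Algebra"
begin

text \<open>A rational function A/B with B(0) \<noteq> 0 is represented by the pair of real
polynomials (A, B). Its Taylor expansion at 0 is the formal power series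
fps_of_poly A / fps_of_poly B.\<close>

definition taylor :: "real poly \<Rightarrow> real poly \<Rightarrow> real fps" where
  "taylor A B = fps_of_poly A / fps_of_poly B"

definition in_R :: "real poly \<Rightarrow> real poly \<Rightarrow> bool" where
  "in_R A B \<longleftrightarrow> poly B 0 \<noteq> 0 \<and> degree A < degree B"

definition U :: "nat \<Rightarrow> 'a fps \<Rightarrow> 'a fps" where
  "U p F = Abs_fps (\<lambda>n. fps_nth F (p * n))"

end

theory Submission
  imports Defs
begin

text \<open>If \<open>f = x\<^sup>m f\<^sub>0\<close> with \<open>f\<^sub>0(0) \<noteq> 0\<close>, the first nonzero Taylor coefficient of \<open>f\<close> is
  \<open>a\<^sub>m\<close>. Were \<open>m = p k\<close>, comparing the \<open>k\<close>-th coefficients of \<open>U\<^sub>p f = \<lambda> f\<close> would give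
  \<open>a\<^sub>m = \<lambda> a\<^sub>k = 0\<close>, since \<open>0 < k < m\<close>.\<close>

lemma U_nth [simp]: "U p F $ n = F $ (p * n)"
  by (simp add: U_def)

lemma not_dvd_subdegree_if_U_eigen:
  fixes F :: "'a :: comm_ring_1 fps"
  assumes p: "2 \<le> p" and eigen: "U p F = fps_const c * F" and pos: "0 < subdegree F"
  shows "\<not> p dvd subdegree F"
proof
  assume "p dvd subdegree F"
  then obtain k where m: "subdegree F = p * k" ..
  with pos have "0 < k" by (cases k) auto
  with p m have "k < subdegree F" by simp
  have "F \<noteq> 0" using pos by auto
  have "F $ subdegree F = U p F $ k" by (simp add: m)
  also have "\<dots> = c * F $ k" by (simp add: eigen)
  also have "\<dots> = 0" using \<open>k < subdegree F\<close> by auto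
  finally show False using \<open>F \<noteq> 0\<close> by simp
qed

lemma taylor_times_denom:
  assumes "poly B 0 \<noteq> 0"
  shows "taylor A B * fps_of_poly B = fps_of_poly A"
  using assms by (simp add: taylor_def fps_divide_unit poly_0_coeff_0 mult.assoc inverse_mult_eq_1)

lemma subdegree_taylor:
  assumes B: "poly B 0 \<noteq> 0" and C: "poly C 0 \<noteq> 0" and D: "poly D 0 \<noteq> 0"
    and factor: "A * D = monom 1 m * C * B"
  shows "subdegree (taylor A B) = m"
proof -
  have "taylor A B * fps_of_poly D * fps_of_poly B = fps_of_poly (A * D)"
    by (metis taylor_times_denom[OF B] fps_of_poly_mult mult.commute mult.assoc)
  also have "\<dots> = fps_X ^ m * fps_of_poly C * fps_of_poly B"
    by (simp add: factor fps_of_poly_monom')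
  finally have factored: "taylor A B * fps_of_poly D = fps_X ^ m * fps_of_poly C"
    using B by (auto simp: poly_0_coeff_0)
  have "fps_of_poly C \<noteq> 0" "subdegree (fps_of_poly C) = 0"
       "fps_of_poly D \<noteq> 0" "subdegree (fps_of_poly D) = 0"
    using C D by (auto simp: poly_0_coeff_0)
  moreover from factored this have "taylor A B \<noteq> 0" by auto
  ultimately show ?thesis
    using arg_cong[OF factored, of subdegree] by (simp add: subdegree_mult)
qed

theorem mainTheorem13:
  fixes p m :: nat and A B C D :: "real poly" and lam :: real
  assumes "p \<ge> 2"
    and "in_R A B"
    and "lam \<noteq> 0"
    and "U p (taylor A B) = fps_const lam * taylor A B"
    and "m > 0"
    and "poly D 0 \<noteq> 0" and "poly C 0 \<noteq> 0"
    and "A * D = monom 1 m * C * B"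
  shows "\<not> p dvd m"
proof -
  have "subdegree (taylor A B) = m"
    using assms(2,6-8) by (intro subdegree_taylor) (auto simp: in_R_def)
  then show ?thesis
    using not_dvd_subdegree_if_U_eigen[OF assms(1,4)] assms(5) by simp
qed

end
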